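(* Let $(ABCD)$ be a quadrilateral in the Euclidean plane whose diagonals are orthogonal and whose vertex angles all lie in $[\eta,2\pi-\eta]$ for some $\eta>0$. For any two points $M,M'$ on the boundary of the quadrilateral, let $\ell$ be the minimal length of a path from $M$ to $M'$ along the boundary of $(ABCD)$. Then $\frac{MM'}{\ell}\ge\frac{\sin\eta}{4}$. *)

theory Defs
  imports "HOL-Analysis.Analysis"
begin

text \<open>Angle at vertex Q of the polygon with neighbours P (previous) and R (next):
  the counterclockwise angle turning the ray Q->R onto the ray Q->P, in [0, 2pi).
  For a counterclockwise-oriented polygon this is the interior angle; for a clockwise one
  the interior angle is 2pi minus it. Since the condition [eta, 2pi - eta] is symmetric
  under t -> 2pi - t, the orientation does not matter.\<close>
definition vertex_angle :: "complex \<Rightarrow> complex \<Rightarrow> complex \<Rightarrow> real" where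
  "vertex_angle P Q R = (let t = Arg ((P - Q) / (R - Q)) in if t < 0 then t + 2 * pi else t)"

definition perimeter4 :: "complex \<Rightarrow> complex \<Rightarrow> complex \<Rightarrow> complex \<Rightarrow> real" where
  "perimeter4 A B C D = dist A B + dist B C + dist C D + dist D A"

definition bpoint :: "complex \<Rightarrow> complex \<Rightarrow> complex \<Rightarrow> complex \<Rightarrow> real \<Rightarrow> complex" where
  "bpoint A B C D s =
    (let a = dist A B; b = dist B C; c = dist C D; d = dist D A in
     if s \<le> a then linepath A B (s / a)
     else if s \<le> a + b then linepath B C ((s - a) / b)
     else if s \<le> a + b + c then linepath C D ((s - a - b) / c)
     else linepath D A ((s - a - b - c) / d))"

definition bdist :: "complex \<Rightarrow> complex \<Rightarrow> complex \<Rightarrow> complex \<Rightarrow> real \<Rightarrow> real \<Rightarrow> real" where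
  "bdist A B C D s s' = min \<bar>s - s'\<bar> (perimeter4 A B C D - \<bar>s - s'\<bar>)"

definition simple_quad :: "complex \<Rightarrow> complex \<Rightarrow> complex \<Rightarrow> complex \<Rightarrow> bool" where
  "simple_quad A B C D \<longleftrightarrow>
     distinct [A, B, C, D] \<and>
     closed_segment A B \<inter> closed_segment C D = {} \<and>
     closed_segment B C \<inter> closed_segment D A = {} \<and>
     closed_segment A B \<inter> closed_segment B C = {B} \<and>
     closed_segment B C \<inter> closed_segment C D = {C} \<and>
     closed_segment C D \<inter> closed_segment D A = {D} \<and>
     closed_segment D A \<inter> closed_segment A B = {A}"

end

theory Submission
  imports Defs
begin

text \<open>At a vertex whose angle lies in \<open>[\<eta>, 2\<pi> - \<eta>]\<close>, two points \<open>X\<close>, \<open>Y\<close> on the incident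
  sides satisfy \<open>XY \<ge> sin \<eta> / 2 \<cdot> (XV + VY)\<close> by the law of cosines; this settles points on
  equal or adjacent sides. For \<open>M\<close>, \<open>M'\<close> on opposite sides, the lines of the diagonals meet
  inside one of the diagonals (by simplicity), and orthogonality of the diagonals then yields a
  point \<open>Y\<close> on one of the two remaining sides from which \<open>MM'\<close> is seen under a non-acute angle.
  Hence \<open>MM' \<ge> max MY YM'\<close>, and the corner estimate at the two vertices passed by the
  boundary path \<open>M \<rightarrow> Y \<rightarrow> M'\<close> bounds \<open>MM'\<close> by \<open>sin \<eta> / 4\<close> times its length. Cyclically
  relabelling the vertices reduces everything to \<open>M\<close> on the side \<open>AB\<close>.\<close>

lemma norm_diff_ge_of_inner_le_cos:
  fixes u w :: "'a::real_inner"
  assumes "u \<bullet> w \<le> cos \<eta> * (norm u * norm w)"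
  shows "sin \<eta> / 2 * (norm u + norm w) \<le> norm (u - w)"
proof -
  define a b c where "a = norm u" and "b = norm w" and "c = cos \<eta>"
  have sin_sq: "(sin \<eta>)\<^sup>2 = (1 - c) * (1 + c)"
    by (simp add: c_def sin_squared_eq algebra_simps power2_eq_square)
  have "(sin \<eta> / 2 * (a + b))\<^sup>2 = (1 - c) * (1 + c) / 4 * (a + b)\<^sup>2"
    by (simp add: power_mult_distrib power_divide sin_sq)
  also have "\<dots> \<le> (1 - c) / 2 * (a + b)\<^sup>2 + (1 + c) / 2 * (a - b)\<^sup>2"
  proof -
    have "-1 \<le> c" "c \<le> 1" by (auto simp: c_def)
    then have "(1 - c) * (1 + c) / 4 \<le> (1 - c) / 2"
      using mult_left_mono[of "1 + c" 2 "1 - c"] by simp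
    then have "(1 - c) * (1 + c) / 4 * (a + b)\<^sup>2 \<le> (1 - c) / 2 * (a + b)\<^sup>2"
      by (rule mult_right_mono) simp
    moreover have "0 \<le> (1 + c) / 2 * (a - b)\<^sup>2" using \<open>-1 \<le> c\<close> by simp
    ultimately show ?thesis by linarith
  qed
  also have "\<dots> = a\<^sup>2 + b\<^sup>2 - 2 * c * a * b"
    by (simp add: power2_eq_square field_simps)
  also have "\<dots> \<le> a\<^sup>2 + b\<^sup>2 - 2 * (u \<bullet> w)"
    using assms by (simp add: a_def b_def c_def)
  also have "\<dots> = (norm (u - w))\<^sup>2"
    by (simp add: a_def b_def power2_norm_eq_inner inner_diff_left inner_diff_right inner_commute)
  finally have "\<bar>sin \<eta> / 2 * (a + b)\<bar> \<le> norm (u - w)"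
    by (simp only: power2_le_iff_abs_le norm_ge_zero)
  then show ?thesis by (simp add: a_def b_def)
qed

lemma inner_le_cos_of_vertex_angle:
  assumes "P \<noteq> V" "R \<noteq> V" "0 \<le> \<eta>"
    and "\<eta> \<le> vertex_angle P V R" "vertex_angle P V R \<le> 2 * pi - \<eta>"
  shows "(P - V) \<bullet> (R - V) \<le> cos \<eta> * (norm (P - V) * norm (R - V))"
proof -
  define z where "z = (P - V) / (R - V)"
  have "z \<noteq> 0" using assms by (simp add: z_def)
  have "cos (Arg z) \<le> cos \<eta>"
  proof (cases "Arg z < 0")
    case True
    then have "\<eta> \<le> - Arg z" "- Arg z \<le> pi"
      using assms(5) Arg_bounded[of z] by (auto simp: vertex_angle_def z_def Let_def)
    then show ?thesis using assms(3) cos_monotone_0_pi_le[of \<eta> "- Arg z"] by simp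
  next
    case False
    then have "\<eta> \<le> Arg z" "Arg z \<le> pi"
      using assms(4) Arg_bounded[of z] by (auto simp: vertex_angle_def z_def Let_def)
    then show ?thesis using assms(3) by (intro cos_monotone_0_pi_le)
  qed
  moreover have "cos (Arg z) = ((P - V) \<bullet> (R - V)) / (norm (P - V) * norm (R - V))"
    using \<open>z \<noteq> 0\<close> assms(2)
    by (simp add: cos_Arg z_def Re_divide' inner_complex_def norm_divide field_simps power2_eq_square)
  moreover have "norm (P - V) * norm (R - V) > 0" using assms(1,2) by simp
  ultimately show ?thesis by (simp add: divide_le_eq)
qed

lemma dist_ge_at_corner:
  fixes P V R X Y :: complex
  assumes "P \<noteq> V" "R \<noteq> V" "0 \<le> \<eta>"
    and "\<eta> \<le> vertex_angle P V R" "vertex_angle P V R \<le> 2 * pi - \<eta>"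
    and "X \<in> closed_segment V P" "Y \<in> closed_segment V R"
  shows "sin \<eta> / 2 * (dist X V + dist V Y) \<le> dist X Y"
proof -
  obtain x where x: "0 \<le> x" "X - V = x *\<^sub>R (P - V)"
    using assms(6) by (auto simp: in_segment algebra_simps)
  obtain y where y: "0 \<le> y" "Y - V = y *\<^sub>R (R - V)"
    using assms(7) by (auto simp: in_segment algebra_simps)
  have "(X - V) \<bullet> (Y - V) = x * y * ((P - V) \<bullet> (R - V))"
    by (simp add: x y)
  also have "\<dots> \<le> x * y * (cos \<eta> * (norm (P - V) * norm (R - V)))"
    using inner_le_cos_of_vertex_angle[OF assms(1-5)] x(1) y(1) by (simp add: mult_left_mono)
  also have "\<dots> = cos \<eta> * (norm (X - V) * norm (Y - V))"
    by (simp add: x y)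
  finally have "sin \<eta> / 2 * (norm (X - V) + norm (Y - V)) \<le> norm ((X - V) - (Y - V))"
    by (rule norm_diff_ge_of_inner_le_cos)
  then show ?thesis by (simp add: dist_norm norm_minus_commute)
qed

lemma dist_le_of_inner_nonpos:
  fixes M M' Y :: "'a::real_inner"
  assumes "(M - Y) \<bullet> (M' - Y) \<le> 0"
  shows "dist M Y \<le> dist M M'" "dist Y M' \<le> dist M M'"
proof -
  have e: "(dist M M')\<^sup>2 = (dist M Y)\<^sup>2 + (dist Y M')\<^sup>2 - 2 * ((M - Y) \<bullet> (M' - Y))"
    unfolding dist_norm power2_norm_eq_inner
    by (simp add: inner_diff_left inner_diff_right inner_commute)
  have "(dist M Y)\<^sup>2 \<le> (dist M M')\<^sup>2"
    using e assms zero_le_power2[of "dist Y M'"] by linarith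
  then show "dist M Y \<le> dist M M'" by (rule power2_le_imp_le) simp
  have "(dist Y M')\<^sup>2 \<le> (dist M M')\<^sup>2"
    using e assms zero_le_power2[of "dist M Y"] by linarith
  then show "dist Y M' \<le> dist M M'" by (rule power2_le_imp_le) simp
qed

lemma orthogonal_lines_meet:
  fixes A B C D :: complex
  assumes "(C - A) \<bullet> (D - B) = 0" "A \<noteq> C" "B \<noteq> D"
  obtains l m where "linepath A C l = linepath B D m"
proof -
  define q w where "q = (B - A) / (C - A)" and "w = (D - B) / (C - A)"
  have "Re w = 0"
    using assms(1) by (simp add: w_def Re_divide inner_complex_def algebra_simps)
  moreover have "w \<noteq> 0" using assms by (simp add: w_def)
  ultimately have w: "w = \<i> * complex_of_real (Im w)" "Im w \<noteq> 0"
    by (auto simp: complex_eq_iff)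
  define l m where "l = Re q" and "m = - Im q / Im w"
  have BA: "B - A = (C - A) * q" and DB: "D - B = (C - A) * w"
    using assms(2) by (simp_all add: q_def w_def)
  have "linepath A C l - linepath B D m
      = (C - A) * complex_of_real l - (B - A) - complex_of_real m * (D - B)"
    by (simp add: linepath_def scaleR_conv_of_real algebra_simps)
  also have "\<dots> = (C - A) * (complex_of_real (Re q) - q - complex_of_real m * w)"
    unfolding BA DB by (simp add: l_def algebra_simps)
  also have "complex_of_real (Re q) - q - complex_of_real m * w = 0"
    using w by (simp add: m_def complex_eq_iff)
  finally show ?thesis by (intro that[of l m]) simp
qed

lemma scaleR_combination_in_closed_segment:
  fixes a b :: "'a::real_vector"
  assumes "0 \<le> p * q" "p + q \<noteq> 0"
  shows "inverse (p + q) *\<^sub>R (p *\<^sub>R a + q *\<^sub>R b) \<in> closed_segment a b"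
proof -
  have "0 \<le> q / (p + q)" "q / (p + q) \<le> 1"
    using assms by (auto simp: divide_simps zero_le_mult_iff)
  moreover have "1 - q / (p + q) = p / (p + q)"
    using assms(2) by (simp add: field_simps)
  ultimately show ?thesis
    by (auto simp: in_segment scaleR_add_right divide_inverse_commute intro!: exI[of _ "q / (p + q)"])
qed

lemma diagonal_lines_meet_in_a_diagonal:
  fixes A B C D :: "'a::real_normed_vector"
  assumes O: "linepath A C l = linepath B D m"
    and "closed_segment A B \<inter> closed_segment C D = {}"
    and "closed_segment B C \<inter> closed_segment D A = {}"
  shows "0 \<le> l \<and> l \<le> 1 \<or> 0 \<le> m \<and> m \<le> 1"
proof (rule ccontr)
  assume "\<not> ?thesis"
  then consider "l < 0 \<and> 1 < m \<or> 1 < l \<and> m < 0" | "l < 0 \<and> m < 0 \<or> 1 < l \<and> 1 < m"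
    by linarith
  then show False
  proof cases
    case 1
    have same_point: "(l - 1) *\<^sub>R A + (1 - m) *\<^sub>R B = l *\<^sub>R C + (- m) *\<^sub>R D"
      using O by (simp add: linepath_def algebra_simps)
    have same_weight: "(l - 1) + (1 - m) = l + - m" by simp
    have "inverse ((l - 1) + (1 - m)) *\<^sub>R ((l - 1) *\<^sub>R A + (1 - m) *\<^sub>R B) \<in> closed_segment A B"
      using 1 by (intro scaleR_combination_in_closed_segment) (auto simp: zero_le_mult_iff mult_le_0_iff)
    moreover have "inverse (l + - m) *\<^sub>R (l *\<^sub>R C + (- m) *\<^sub>R D) \<in> closed_segment C D"
      using 1 by (intro scaleR_combination_in_closed_segment) (auto simp: zero_le_mult_iff mult_le_0_iff)
    ultimately show False using assms(2) unfolding same_point same_weight by blast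
  next
    case 2
    have same_point: "(1 - m) *\<^sub>R B + (- l) *\<^sub>R C = (- m) *\<^sub>R D + (1 - l) *\<^sub>R A"
      using O by (simp add: linepath_def algebra_simps)
    have same_weight: "(1 - m) + - l = - m + (1 - l)" by simp
    have "inverse ((1 - m) + - l) *\<^sub>R ((1 - m) *\<^sub>R B + (- l) *\<^sub>R C) \<in> closed_segment B C"
      using 2 by (intro scaleR_combination_in_closed_segment) (auto simp: zero_le_mult_iff mult_le_0_iff)
    moreover have "inverse (- m + (1 - l)) *\<^sub>R ((- m) *\<^sub>R D + (1 - l) *\<^sub>R A) \<in> closed_segment D A"
      using 2 by (intro scaleR_combination_in_closed_segment) (auto simp: zero_le_mult_iff mult_le_0_iff)
    ultimately show False using assms(3) unfolding same_point same_weight by blast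
  qed
qed

lemma exists_obtuse_point_on_side:
  fixes A B C D M M' :: "'a::real_inner"
  assumes orth: "(C - A) \<bullet> (D - B) = 0"
    and O: "linepath A C l = linepath B D m" and "0 \<le> l" "l \<le> 1"
    and "M \<in> closed_segment A B" "M' \<in> closed_segment C D"
  shows "\<exists>Y \<in> closed_segment B C \<union> closed_segment D A. (M - Y) \<bullet> (M' - Y) \<le> 0"
proof -
  obtain t where t: "0 \<le> t" "t \<le> 1" "M = (1 - t) *\<^sub>R A + t *\<^sub>R B"
    using \<open>M \<in> closed_segment A B\<close> by (auto simp: in_segment)
  obtain u where u: "0 \<le> u" "u \<le> 1" "M' = (1 - u) *\<^sub>R C + u *\<^sub>R D"
    using \<open>M' \<in> closed_segment C D\<close> by (auto simp: in_segment)
  have "B - A = l *\<^sub>R (C - A) - m *\<^sub>R (D - B)"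
    using O by (simp add: linepath_def algebra_simps)
  then have foot_AB: "(C - A) \<bullet> (B - A) = l * ((C - A) \<bullet> (C - A))"
    using orth by (simp add: inner_diff_right)
  have foot_CB: "(C - A) \<bullet> (C - B) = (1 - l) * ((C - A) \<bullet> (C - A))"
    using foot_AB by (simp add: inner_diff_right algebra_simps)
  have proj: "(C - A) \<bullet> D = (C - A) \<bullet> B"
    using orth by (simp add: inner_diff_right)
  show ?thesis
  proof (cases "u \<le> t")
    case True
    \<comment> \<open>\<open>MY\<close> is parallel to \<open>AC\<close>, and \<open>B\<close>, \<open>D\<close> have the same projection onto \<open>AC\<close>.\<close>
    define Y where "Y = (1 - (1 - t)) *\<^sub>R B + (1 - t) *\<^sub>R C"
    have "Y \<in> closed_segment B C"
      using t by (auto simp: Y_def in_segment intro!: exI[of _ "1 - t"])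
    have MY: "M - Y = (t - 1) *\<^sub>R (C - A)"
      by (simp add: t Y_def algebra_simps)
    have "M' - Y = (t - u) *\<^sub>R C + u *\<^sub>R D - t *\<^sub>R B"
      by (simp add: u Y_def algebra_simps)
    then have "(C - A) \<bullet> (M' - Y) = (t - u) * ((C - A) \<bullet> C) + u * ((C - A) \<bullet> D) - t * ((C - A) \<bullet> B)"
      by (simp only: inner_add_right inner_diff_right inner_scaleR_right)
    then have M'Y: "(C - A) \<bullet> (M' - Y) = (t - u) * ((C - A) \<bullet> (C - B))"
      unfolding proj by (simp add: inner_diff_right algebra_simps)
    have "(M - Y) \<bullet> (M' - Y) = (t - 1) * (t - u) * (1 - l) * ((C - A) \<bullet> (C - A))"
      unfolding MY inner_scaleR_left M'Y foot_CB by simp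
    also have "\<dots> \<le> 0"
      using t True \<open>l \<le> 1\<close> by (simp add: mult_nonpos_nonneg)
    finally show ?thesis using \<open>Y \<in> closed_segment B C\<close> by blast
  next
    case False
    define Y where "Y = (1 - (1 - u)) *\<^sub>R D + (1 - u) *\<^sub>R A"
    have "Y \<in> closed_segment D A"
      using u by (auto simp: Y_def in_segment intro!: exI[of _ "1 - u"])
    have M'Y: "M' - Y = (1 - u) *\<^sub>R (C - A)"
      by (simp add: u Y_def algebra_simps)
    have "M - Y = (u - t) *\<^sub>R A + t *\<^sub>R B - u *\<^sub>R D"
      by (simp add: t Y_def algebra_simps)
    then have "(C - A) \<bullet> (M - Y) = (u - t) * ((C - A) \<bullet> A) + t * ((C - A) \<bullet> B) - u * ((C - A) \<bullet> D)"
      by (simp only: inner_add_right inner_diff_right inner_scaleR_right)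
    then have MY: "(C - A) \<bullet> (M - Y) = (t - u) * ((C - A) \<bullet> (B - A))"
      unfolding proj by (simp add: inner_diff_right algebra_simps)
    have "(M - Y) \<bullet> (M' - Y) = (1 - u) * (t - u) * l * ((C - A) \<bullet> (C - A))"
      unfolding M'Y inner_scaleR_right inner_commute[of "M - Y"] MY foot_AB by simp
    also have "\<dots> \<le> 0"
      using u False \<open>0 \<le> l\<close> by (simp add: mult_nonneg_nonpos mult_nonpos_nonneg)
    finally show ?thesis using \<open>Y \<in> closed_segment D A\<close> by blast
  qed
qed

lemma exists_obtuse_point_between_opposite_sides:
  fixes A B C D M M' :: complex
  assumes "simple_quad A B C D" "(C - A) \<bullet> (D - B) = 0"
    and "M \<in> closed_segment A B" "M' \<in> closed_segment C D"
  shows "\<exists>Y \<in> closed_segment B C \<union> closed_segment D A. (M - Y) \<bullet> (M' - Y) \<le> 0"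
proof -
  have "A \<noteq> C" "B \<noteq> D"
    and disjoint: "closed_segment A B \<inter> closed_segment C D = {}" "closed_segment B C \<inter> closed_segment D A = {}"
    using assms(1) by (auto simp: simple_quad_def)
  then obtain l m where O: "linepath A C l = linepath B D m"
    using orthogonal_lines_meet assms(2) by blast
  from diagonal_lines_meet_in_a_diagonal[OF O disjoint]
  consider "0 \<le> l" "l \<le> 1" | "0 \<le> m" "m \<le> 1" by blast
  then show ?thesis
  proof cases
    case 1
    then show ?thesis using exists_obtuse_point_on_side[OF assms(2) O _ _ assms(3,4)] by blast
  next
    case 2
    have "(D - B) \<bullet> (C - A) = 0" using assms(2) by (simp add: inner_commute)
    from exists_obtuse_point_on_side[OF this O[symmetric] 2, of M M'] assms(3,4)
    show ?thesis by (auto simp: closed_segment_commute)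
  qed
qed

definition orthodiagonal_quad :: "complex \<Rightarrow> complex \<Rightarrow> complex \<Rightarrow> complex \<Rightarrow> bool" where
  "orthodiagonal_quad A B C D \<longleftrightarrow> simple_quad A B C D \<and> (C - A) \<bullet> (D - B) = 0"

definition vertex_angles_within :: "real \<Rightarrow> complex \<Rightarrow> complex \<Rightarrow> complex \<Rightarrow> complex \<Rightarrow> bool" where
  "vertex_angles_within \<eta> A B C D \<longleftrightarrow>
     (\<forall>\<theta> \<in> {vertex_angle D A B, vertex_angle A B C, vertex_angle B C D, vertex_angle C D A}.
        \<eta> \<le> \<theta> \<and> \<theta> \<le> 2 * pi - \<eta>)"

lemma orthodiagonal_quad_rotate:
  "orthodiagonal_quad A B C D \<Longrightarrow> orthodiagonal_quad B C D A"
  unfolding orthodiagonal_quad_def simple_quad_def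
  by (auto simp: Int_commute inner_commute inner_diff_left inner_diff_right algebra_simps)

lemma vertex_angles_within_rotate:
  "vertex_angles_within \<eta> A B C D \<Longrightarrow> vertex_angles_within \<eta> B C D A"
  unfolding vertex_angles_within_def by auto

lemma sin_nonneg_if_vertex_angles_within:
  "0 \<le> \<eta> \<Longrightarrow> vertex_angles_within \<eta> A B C D \<Longrightarrow> 0 \<le> sin \<eta>"
  unfolding vertex_angles_within_def by (auto intro!: sin_ge_zero)

lemma dist_ge_across_opposite_sides:
  assumes "orthodiagonal_quad A B C D" "vertex_angles_within \<eta> A B C D" "0 \<le> \<eta>"
    and M: "M \<in> closed_segment A B" and M': "M' \<in> closed_segment C D"
  shows "sin \<eta> / 4 * min (dist M B + dist B C + dist C M') (dist M A + dist A D + dist D M')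
    \<le> dist M M'"
proof -
  have distinct: "A \<noteq> B" "B \<noteq> C" "C \<noteq> D" "D \<noteq> A"
    using assms(1) by (auto simp: orthodiagonal_quad_def simple_quad_def)
  have angles: "\<eta> \<le> vertex_angle D A B" "vertex_angle D A B \<le> 2 * pi - \<eta>"
    "\<eta> \<le> vertex_angle A B C" "vertex_angle A B C \<le> 2 * pi - \<eta>"
    "\<eta> \<le> vertex_angle B C D" "vertex_angle B C D \<le> 2 * pi - \<eta>"
    "\<eta> \<le> vertex_angle C D A" "vertex_angle C D A \<le> 2 * pi - \<eta>"
    using assms(2) by (auto simp: vertex_angles_within_def)
  have "0 \<le> sin \<eta>" using assms(3,2) by (rule sin_nonneg_if_vertex_angles_within)
  obtain Y where Y: "Y \<in> closed_segment B C \<union> closed_segment D A" "(M - Y) \<bullet> (M' - Y) \<le> 0"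
    using exists_obtuse_point_between_opposite_sides[of A B C D M M'] assms(1) M M'
    by (auto simp: orthodiagonal_quad_def)
  note Y_near = dist_le_of_inner_nonpos[OF Y(2)]
  from Y(1) consider "Y \<in> closed_segment B C" | "Y \<in> closed_segment D A" by blast
  then show ?thesis
  proof cases
    case 1
    have corner1: "sin \<eta> / 2 * (dist M B + dist B Y) \<le> dist M Y"
      using distinct angles 1 M assms(3) by (intro dist_ge_at_corner) (auto simp: closed_segment_commute)
    have corner2: "sin \<eta> / 2 * (dist Y C + dist C M') \<le> dist Y M'"
      using distinct angles 1 M' assms(3) by (intro dist_ge_at_corner) (auto simp: closed_segment_commute)
    have "dist B C = dist B Y + dist Y C"
      using 1 by (simp add: between_mem_segment[symmetric] between)
    then have "sin \<eta> / 4 * (dist M B + dist B C + dist C M')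
        = (sin \<eta> / 2 * (dist M B + dist B Y) + sin \<eta> / 2 * (dist Y C + dist C M')) / 2"
      by (simp add: algebra_simps)
    also have "\<dots> \<le> (dist M Y + dist Y M') / 2"
      using corner1 corner2 by simp
    also have "\<dots> \<le> dist M M'"
      using Y_near by simp
    finally have "sin \<eta> / 4 * (dist M B + dist B C + dist C M') \<le> dist M M'" .
    moreover have "sin \<eta> / 4 * min (dist M B + dist B C + dist C M') (dist M A + dist A D + dist D M')
        \<le> sin \<eta> / 4 * (dist M B + dist B C + dist C M')"
      using \<open>0 \<le> sin \<eta>\<close> by (intro mult_left_mono) auto
    ultimately show ?thesis by linarith
  next
    case 2
    have corner1: "sin \<eta> / 2 * (dist Y A + dist A M) \<le> dist Y M"
      using distinct angles 2 M assms(3) by (intro dist_ge_at_corner) (auto simp: closed_segment_commute)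
    have corner2: "sin \<eta> / 2 * (dist M' D + dist D Y) \<le> dist M' Y"
      using distinct angles 2 M' assms(3) by (intro dist_ge_at_corner) (auto simp: closed_segment_commute)
    have "dist A D = dist A Y + dist Y D"
      using 2 by (simp add: between_mem_segment[symmetric] between dist_commute)
    then have "sin \<eta> / 4 * (dist M A + dist A D + dist D M')
        = (sin \<eta> / 2 * (dist Y A + dist A M) + sin \<eta> / 2 * (dist M' D + dist D Y)) / 2"
      by (simp add: dist_commute algebra_simps)
    also have "\<dots> \<le> (dist Y M + dist M' Y) / 2"
      using corner1 corner2 by simp
    also have "\<dots> \<le> dist M M'"
      using Y_near by (simp add: dist_commute)
    finally have "sin \<eta> / 4 * (dist M A + dist A D + dist D M') \<le> dist M M'" .
    moreover have "sin \<eta> / 4 * min (dist M B + dist B C + dist C M') (dist M A + dist A D + dist D M')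
        \<le> sin \<eta> / 4 * (dist M A + dist A D + dist D M')"
      using \<open>0 \<le> sin \<eta>\<close> by (intro mult_left_mono) auto
    ultimately show ?thesis by linarith
  qed
qed

lemma dist_linepath_arclength:
  fixes U V :: "'a::real_normed_vector"
  assumes "U \<noteq> V"
  shows "dist (linepath U V (x / dist U V)) (linepath U V (y / dist U V)) = \<bar>x - y\<bar>"
proof -
  have "linepath U V (x / dist U V) - linepath U V (y / dist U V) = ((x - y) / dist U V) *\<^sub>R (V - U)"
    by (simp add: linepath_def algebra_simps diff_divide_distrib)
  then show ?thesis
    using assms by (simp add: dist_norm norm_minus_commute[of V U])
qed

lemma bpoint_first_side:
  assumes "A \<noteq> B" "0 \<le> s" "s \<le> dist A B"
  shows "bpoint A B C D s = linepath A B (s / dist A B)"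
    and "bpoint A B C D s \<in> closed_segment A B"
    and "dist A (bpoint A B C D s) = s"
    and "dist (bpoint A B C D s) B = dist A B - s"
proof -
  show eq: "bpoint A B C D s = linepath A B (s / dist A B)"
    using assms(3) by (simp add: bpoint_def)
  show "bpoint A B C D s \<in> closed_segment A B"
    unfolding eq linepath_image_01[symmetric] using assms by (auto simp: divide_simps)
  have "A = linepath A B (0 / dist A B)" "B = linepath A B (dist A B / dist A B)"
    using assms(1) by (simp_all add: linepath_0' linepath_1')
  then show "dist A (bpoint A B C D s) = s" "dist (bpoint A B C D s) B = dist A B - s"
    using assms unfolding eq by (metis dist_linepath_arclength abs_of_nonneg diff_zero abs_minus_commute
        diff_ge_0_iff_ge)+
qed

lemma bpoint_rotate:
  assumes "A \<noteq> B" "B \<noteq> C" "C \<noteq> D" "D \<noteq> A"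
    and "dist A B \<le> s" "s \<le> perimeter4 A B C D"
  shows "bpoint B C D A (s - dist A B) = bpoint A B C D s"
  using assms by (auto simp: bpoint_def Let_def perimeter4_def dist_commute linepath_0' linepath_1' diff_diff_eq)

lemma perimeter4_rotate: "perimeter4 B C D A = perimeter4 A B C D"
  by (simp add: perimeter4_def)

lemma bdist_rotate: "bdist B C D A (s - dist A B) (s' - dist A B) = bdist A B C D s s'"
  by (simp add: bdist_def perimeter4_rotate)

lemma bdist_commute: "bdist A B C D s s' = bdist A B C D s' s"
  by (simp add: bdist_def abs_minus_commute)

lemma bpoint_second_side:
  assumes "A \<noteq> B" "B \<noteq> C" "C \<noteq> D" "D \<noteq> A"
    and "dist A B \<le> s" "s \<le> dist A B + dist B C"
  shows "bpoint A B C D s \<in> closed_segment B C"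
    and "dist B (bpoint A B C D s) = s - dist A B"
    and "dist (bpoint A B C D s) C = dist B C - (s - dist A B)"
proof -
  have "s \<le> perimeter4 A B C D"
    using assms(6) zero_le_dist[of C D] zero_le_dist[of D A] unfolding perimeter4_def by linarith
  then have "bpoint A B C D s = bpoint B C D A (s - dist A B)"
    using assms by (simp add: bpoint_rotate)
  then show "bpoint A B C D s \<in> closed_segment B C" "dist B (bpoint A B C D s) = s - dist A B"
    "dist (bpoint A B C D s) C = dist B C - (s - dist A B)"
    using bpoint_first_side[of B C "s - dist A B" D A] assms by auto
qed

lemma bpoint_third_side:
  assumes "A \<noteq> B" "B \<noteq> C" "C \<noteq> D" "D \<noteq> A"
    and "dist A B + dist B C \<le> s" "s \<le> dist A B + dist B C + dist C D"
  shows "bpoint A B C D s \<in> closed_segment C D"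
    and "dist C (bpoint A B C D s) = s - dist A B - dist B C"
    and "dist (bpoint A B C D s) D = dist C D - (s - dist A B - dist B C)"
proof -
  have "dist A B \<le> s" "s \<le> perimeter4 A B C D"
    using assms(5,6) zero_le_dist[of B C] zero_le_dist[of D A] unfolding perimeter4_def by linarith+
  then have "bpoint A B C D s = bpoint B C D A (s - dist A B)"
    using assms by (simp add: bpoint_rotate)
  then show "bpoint A B C D s \<in> closed_segment C D"
    "dist C (bpoint A B C D s) = s - dist A B - dist B C"
    "dist (bpoint A B C D s) D = dist C D - (s - dist A B - dist B C)"
    using bpoint_second_side[of B C D A "s - dist A B"] assms by auto
qed

lemma bpoint_fourth_side:
  assumes "A \<noteq> B" "B \<noteq> C" "C \<noteq> D" "D \<noteq> A"
    and "dist A B + dist B C + dist C D \<le> s" "s \<le> perimeter4 A B C D"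
  shows "bpoint A B C D s \<in> closed_segment D A"
    and "dist (bpoint A B C D s) A = perimeter4 A B C D - s"
proof -
  have "dist A B \<le> s"
    using assms(5) zero_le_dist[of B C] zero_le_dist[of C D] by linarith
  then have "bpoint A B C D s = bpoint B C D A (s - dist A B)"
    using assms by (simp add: bpoint_rotate)
  then show "bpoint A B C D s \<in> closed_segment D A" "dist (bpoint A B C D s) A = perimeter4 A B C D - s"
    using bpoint_third_side[of B C D A "s - dist A B"] assms by (auto simp: perimeter4_def)
qed

lemma dist_bpoint_ge_from_first_side:
  assumes quad: "orthodiagonal_quad A B C D" and angles: "vertex_angles_within \<eta> A B C D"
    and "0 \<le> \<eta>" and s: "0 \<le> s" "s \<le> dist A B" and s': "s \<le> s'" "s' \<le> perimeter4 A B C D"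
  shows "sin \<eta> / 4 * bdist A B C D s s' \<le> dist (bpoint A B C D s) (bpoint A B C D s')"
proof -
  define M M' where "M = bpoint A B C D s" and "M' = bpoint A B C D s'"
  have distinct: "A \<noteq> B" "B \<noteq> C" "C \<noteq> D" "D \<noteq> A"
    using quad by (auto simp: orthodiagonal_quad_def simple_quad_def)
  have "0 \<le> sin \<eta>" using \<open>0 \<le> \<eta>\<close> angles by (rule sin_nonneg_if_vertex_angles_within)
  have bdist_eq: "bdist A B C D s s' = min (s' - s) (perimeter4 A B C D - (s' - s))"
    using s' by (simp add: bdist_def)
  have weaken: "sin \<eta> / 4 * bdist A B C D s s' \<le> x" if "0 \<le> L" "L \<in> {s' - s, perimeter4 A B C D - (s' - s)}"
    "sin \<eta> / 2 * L \<le> x" for L x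
  proof -
    have "sin \<eta> / 4 * bdist A B C D s s' \<le> sin \<eta> / 4 * L"
      using that(2) \<open>0 \<le> sin \<eta>\<close> by (intro mult_left_mono) (auto simp: bdist_eq)
    also have "\<dots> \<le> sin \<eta> / 2 * L"
      using that(1) \<open>0 \<le> sin \<eta>\<close> by (intro mult_right_mono) auto
    finally show ?thesis using that(3) by linarith
  qed
  have M: "M \<in> closed_segment A B" "dist A M = s" "dist M B = dist A B - s"
    unfolding M_def using bpoint_first_side[OF distinct(1) s] by auto
  consider (AB) "s' \<le> dist A B"
    | (BC) "dist A B \<le> s'" "s' \<le> dist A B + dist B C"
    | (CD) "dist A B + dist B C \<le> s'" "s' \<le> dist A B + dist B C + dist C D"
    | (DA) "dist A B + dist B C + dist C D \<le> s'"
    by linarith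
  then have "sin \<eta> / 4 * bdist A B C D s s' \<le> dist M M'"
  proof cases
    case AB
    have "dist M M' = s' - s"
      unfolding M_def M'_def using s s' AB distinct(1)
      by (simp add: bpoint_first_side(1) dist_linepath_arclength)
    moreover have "sin \<eta> / 2 * (s' - s) \<le> 1 * (s' - s)"
      using s' sin_le_one[of \<eta>] by (intro mult_right_mono) linarith+
    ultimately show ?thesis using s' by (intro weaken[of "s' - s"]) auto
  next
    case BC
    note M' = bpoint_second_side[OF distinct BC, folded M'_def]
    have "sin \<eta> / 2 * (dist M B + dist B M') \<le> dist M M'"
      using distinct angles \<open>0 \<le> \<eta>\<close> M(1) M'(1)
      by (intro dist_ge_at_corner) (auto simp: vertex_angles_within_def closed_segment_commute)
    then show ?thesis using M M' s' by (intro weaken[of "s' - s"]) auto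
  next
    case CD
    note M' = bpoint_third_side[OF distinct CD, folded M'_def]
    have "sin \<eta> / 4 * min (dist M B + dist B C + dist C M') (dist M A + dist A D + dist D M')
      \<le> dist M M'"
      using quad angles \<open>0 \<le> \<eta>\<close> M(1) M'(1) by (rule dist_ge_across_opposite_sides)
    moreover have "dist M B + dist B C + dist C M' = s' - s"
      "dist M A + dist A D + dist D M' = perimeter4 A B C D - (s' - s)"
      using M M' by (simp_all add: perimeter4_def dist_commute)
    ultimately show ?thesis by (simp add: bdist_eq)
  next
    case DA
    note M' = bpoint_fourth_side[OF distinct DA s'(2), folded M'_def]
    have "sin \<eta> / 2 * (dist M' A + dist A M) \<le> dist M' M"
      using distinct angles \<open>0 \<le> \<eta>\<close> M(1) M'(1)
      by (intro dist_ge_at_corner) (auto simp: vertex_angles_within_def closed_segment_commute)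
    moreover have "dist M' A + dist A M = perimeter4 A B C D - (s' - s)"
      using M M' by simp
    ultimately show ?thesis
      using s s' by (intro weaken[of "perimeter4 A B C D - (s' - s)"]) (auto simp: dist_commute)
  qed
  then show ?thesis by (simp add: M_def M'_def)
qed

text \<open>Each application extends the admissible range of \<open>s\<close> by one side; three applications
  starting from the first side reach the whole perimeter.\<close>

lemma dist_bpoint_ge_rotate_step:
  assumes rotated: "\<And>A B C D s s'. orthodiagonal_quad A B C D \<Longrightarrow> vertex_angles_within \<eta> A B C D \<Longrightarrow>
      0 \<le> \<eta> \<Longrightarrow> 0 \<le> s \<Longrightarrow> s \<le> f A B C D \<Longrightarrow> s \<le> s' \<Longrightarrow> s' \<le> perimeter4 A B C D \<Longrightarrow>
      sin \<eta> / 4 * bdist A B C D s s' \<le> dist (bpoint A B C D s) (bpoint A B C D s')"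
    and quad: "orthodiagonal_quad A B C D" and angles: "vertex_angles_within \<eta> A B C D"
    and "0 \<le> \<eta>" and s: "0 \<le> s" "s \<le> dist A B + f B C D A" and s': "s \<le> s'" "s' \<le> perimeter4 A B C D"
  shows "sin \<eta> / 4 * bdist A B C D s s' \<le> dist (bpoint A B C D s) (bpoint A B C D s')"
proof (cases "s \<le> dist A B")
  case True
  then show ?thesis using dist_bpoint_ge_from_first_side quad angles \<open>0 \<le> \<eta>\<close> s s' by blast
next
  case False
  have distinct: "A \<noteq> B" "B \<noteq> C" "C \<noteq> D" "D \<noteq> A"
    using quad by (auto simp: orthodiagonal_quad_def simple_quad_def)
  have "sin \<eta> / 4 * bdist B C D A (s - dist A B) (s' - dist A B)
      \<le> dist (bpoint B C D A (s - dist A B)) (bpoint B C D A (s' - dist A B))"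
  proof (rule rotated)
    show "s' - dist A B \<le> perimeter4 B C D A"
      using s'(2) zero_le_dist[of A B] perimeter4_rotate[where A = A and B = B and C = C and D = D]
      by linarith
  qed (use False s s' \<open>0 \<le> \<eta>\<close> orthodiagonal_quad_rotate[OF quad] vertex_angles_within_rotate[OF angles] in auto)
  then show ?thesis
    using False s s' distinct by (simp add: bdist_rotate bpoint_rotate)
qed

theorem mainTheorem17:
  fixes A B C D :: complex and \<eta> s s' :: real
  assumes quad: "simple_quad A B C D"
    and orth: "(C - A) \<bullet> (D - B) = 0"
    and eta_pos: "\<eta> > 0"
    and angles: "\<forall>\<theta> \<in> {vertex_angle D A B, vertex_angle A B C, vertex_angle B C D, vertex_angle C D A}.
                   \<eta> \<le> \<theta> \<and> \<theta> \<le> 2 * pi - \<eta>"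
    and s: "s \<in> {0..perimeter4 A B C D}" and s': "s' \<in> {0..perimeter4 A B C D}"
  shows "dist (bpoint A B C D s) (bpoint A B C D s') \<ge> sin \<eta> / 4 * bdist A B C D s s'"
proof -
  note all_sides = dist_bpoint_ge_rotate_step[OF dist_bpoint_ge_rotate_step[OF
      dist_bpoint_ge_rotate_step[OF dist_bpoint_ge_from_first_side]]]
  have ordered: "sin \<eta> / 4 * bdist A B C D t t' \<le> dist (bpoint A B C D t) (bpoint A B C D t')"
    if "0 \<le> t" "t \<le> t'" "t' \<le> perimeter4 A B C D" for t t'
    using quad orth angles eta_pos that
    by (intro all_sides) (auto simp: orthodiagonal_quad_def vertex_angles_within_def perimeter4_def)
  show ?thesis
  proof (cases "s \<le> s'")
    case True
    then show ?thesis using ordered s s' by simp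
  next
    case False
    then show ?thesis using ordered[of s' s] s s' by (simp add: bdist_commute dist_commute)
  qed
qed

end
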